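(* Fix $L>0$. There exists $C>0$ such that for all $u^0\in H^6(0,L)$ with $u^0,Pu^0,P^2u^0\in\mathrm{Dom}(P)$, all $\delta t\in(0,1)$ and $J\ge2$ with $\delta t/\delta x^2\le1/2$, and all $n\ge1$, $$\Big\|\delta t\sum_{k=0}^{n-1}(\mathrm{Id}+\delta t\,\mathsf P_\delta)^{n-1-k}\,\delta x^2\,\mathcal L^2_\delta u(k\delta t,\cdot)\Big\|_{\ell^2}\le C\,\delta x^2\sum_{p=1}^\infty|\alpha_p|p^4,$$ where $u$ is the solution of $\partial_tu=Pu$, $u(0)=u^0$.
   Context: $P=\partial_x^2$ with homogeneous Neumann conditions on $(0,L)$, $\mathrm{Dom}(P)=\{u\in L^2:\partial_x^2u\in L^2,\ \partial_xu(0)=\partial_xu(L)=0\}$; $c_0=1$, $c_p(x)=\sqrt2\cos(p\pi x/L)$, $\alpha_p=\frac1L\int_0^Lu^0c_p\,dx$, $u(t)=\sum_{p\ge0}\alpha_pe^{-p^2\pi^2t/L^2}c_p$. For $J\ge2$: $\delta x=L/(J-1)$, $x_j=j\delta x$, $\|\mathsf v\|_{\ell^2}^2=\frac1J\sum_j\mathsf v_j^2$, $\mathsf P_\delta=\frac1{\delta x^2}\times$ the tridiagonal $J\times J$ matrix with diagonal $(-1,-2,\dots,-2,-1)$ and off-diagonals $1$. For smooth $w$, $\mathcal L^2_\delta w\in\mathbb R^J$ has first and last entries $0$ and, for $1\le j\le J-2$, $j$-th entry $\frac16\Big(\int_0^1(1-\sigma)^3\partial_x^4w(x_j+\sigma\delta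 x)\,d\sigma+\int_0^1(\sigma-1)^3\partial_x^4w(x_j-\sigma\delta x)\,d\sigma\Big)$. *)

theory Defs
  imports "HOL-Analysis.Analysis"
begin

text \<open>Sobolev-type regularity on (0,L): D 0 is a continuous representative of f
  (equal to f almost everywhere on [0,L]), D k are the classical derivatives of
  order k < 6 on [0,L], D 5 is absolutely continuous with derivative D 6 in L^2(0,L).\<close>
definition sobolev6_reps :: "real \<Rightarrow> (real \<Rightarrow> real) \<Rightarrow> (nat \<Rightarrow> real \<Rightarrow> real) \<Rightarrow> bool" where
  "sobolev6_reps L f D \<longleftrightarrow>
     (AE x in lebesgue. x \<in> {0..L} \<longrightarrow> f x = D 0 x) \<and>
     (\<forall>k<5. \<forall>x\<in>{0..L}. (D k has_real_derivative D (Suc k) x) (at x within {0..L})) \<and>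
     set_integrable lebesgue {0..L} (D 6) \<and>
     set_integrable lebesgue {0..L} (\<lambda>x. (D 6 x)^2) \<and>
     (\<forall>x\<in>{0..L}. D 5 x = D 5 0 + (\<integral>y\<in>{0..x}. D 6 y \<partial>lebesgue))"

definition H6 :: "real \<Rightarrow> (real \<Rightarrow> real) \<Rightarrow> bool" where
  "H6 L f \<longleftrightarrow> (\<exists>D. sobolev6_reps L f D)"

text \<open>u, P u, P^2 u all lie in Dom(P) (for u in H^6): Neumann conditions on the
  first, third and fifth derivatives.\<close>
definition iter_dom_P :: "real \<Rightarrow> (real \<Rightarrow> real) \<Rightarrow> bool" where
  "iter_dom_P L f \<longleftrightarrow> (\<exists>D. sobolev6_reps L f D \<and>
      D 1 0 = 0 \<and> D 1 L = 0 \<and> D 3 0 = 0 \<and> D 3 L = 0 \<and> D 5 0 = 0 \<and> D 5 L = 0)"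

definition cfun :: "real \<Rightarrow> nat \<Rightarrow> real \<Rightarrow> real" where
  "cfun L p x = (if p = 0 then 1 else sqrt 2 * cos (real p * pi * x / L))"

definition alpha :: "real \<Rightarrow> (real \<Rightarrow> real) \<Rightarrow> nat \<Rightarrow> real" where
  "alpha L u0 p = (1 / L) * (\<integral>x\<in>{0..L}. u0 x * cfun L p x \<partial>lebesgue)"

definition heat_sol :: "real \<Rightarrow> (real \<Rightarrow> real) \<Rightarrow> real \<Rightarrow> real \<Rightarrow> real" where
  "heat_sol L u0 t x = (\<Sum>p. alpha L u0 p * exp (- ((real p)^2 * pi^2 * t / L^2)) * cfun L p x)"

text \<open>Vectors of R^J are functions nat => real, indices 0..J-1.\<close>
definition l2norm :: "nat \<Rightarrow> (nat \<Rightarrow> real) \<Rightarrow> real" where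
  "l2norm J v = sqrt ((1 / real J) * (\<Sum>j<J. (v j)^2))"

definition Pdelta :: "nat \<Rightarrow> real \<Rightarrow> (nat \<Rightarrow> real) \<Rightarrow> nat \<Rightarrow> real" where
  "Pdelta J dx v j =
     (if j = 0 then v 1 - v 0
      else if j = J - 1 then v (J - 2) - v (J - 1)
      else v (j - 1) - 2 * v j + v (j + 1)) / dx^2"

definition scheme_step :: "nat \<Rightarrow> real \<Rightarrow> real \<Rightarrow> (nat \<Rightarrow> real) \<Rightarrow> nat \<Rightarrow> real" where
  "scheme_step J dx dt v j = v j + dt * Pdelta J dx v j"

definition L2delta :: "nat \<Rightarrow> real \<Rightarrow> (real \<Rightarrow> real) \<Rightarrow> nat \<Rightarrow> real" where
  "L2delta J dx w j =
     (if 1 \<le> j \<and> j \<le> J - 2 then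
        (1 / 6) * ((LBINT s=0..1. (1 - s)^3 * (deriv ^^ 4) w (real j * dx + s * dx))
                 + (LBINT s=0..1. (s - 1)^3 * (deriv ^^ 4) w (real j * dx - s * dx)))
      else 0)"

end

theory Submission
  imports Defs
begin

text \<open>The explicit scheme \<open>Id + dt Pdelta\<close> is an \<open>\<ell>\<^sup>2\<close>-contraction under the CFL condition
  (summation by parts), so the \<open>k\<close>-th term of the sum is bounded by
  \<open>dx\<^sup>2 \<parallel>L2delta u(k dt)\<parallel> \<le> dx\<^sup>2 sup \<bar>\<partial>\<^sub>x\<^sup>4 u(k dt)\<bar> / 3\<close>. Differentiating the cosine series
  of \<open>u\<close> termwise gives \<open>sup \<bar>\<partial>\<^sub>x\<^sup>4 u(t)\<bar> \<le> \<surd>2 (\<pi>/L)\<^sup>4 \<Sum>\<^sub>p \<bar>\<alpha>\<^sub>p\<bar> p\<^sup>4 exp(-p\<^sup>2\<pi>\<^sup>2t/L\<^sup>2)\<close>, and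
  summing in time each mode \<open>p \<ge> 1\<close> contributes at most \<open>(1 + L\<^sup>2/\<pi>\<^sup>2) \<bar>\<alpha>\<^sub>p\<bar> p\<^sup>4\<close>
  (a geometric series). Termwise differentiation needs \<open>\<Sum>\<^sub>p \<bar>\<alpha>\<^sub>p\<bar> p\<^sup>4 < \<infinity>\<close>, which follows from
  \<open>\<alpha>\<^sub>p = O(p\<^sup>-\<^sup>6)\<close>: six integrations by parts, the boundary terms vanishing by the Neumann
  conditions on \<open>u\<^sup>0\<close>, \<open>P u\<^sup>0\<close>, \<open>P\<^sup>2 u\<^sup>0\<close>.\<close>

section \<open>Decay of the cosine coefficients\<close>

lemma sigma_finite_lebesgue: "sigma_finite_measure (lebesgue :: real measure)"
proof -
  obtain A :: "real set set" where "countable A" "A \<subseteq> sets lborel" "\<Union>A = space lborel"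
    "\<forall>a\<in>A. emeasure lborel a \<noteq> \<infinity>"
    using sigma_finite_lborel unfolding sigma_finite_measure_def by blast
  then show ?thesis
    unfolding sigma_finite_measure_def by (intro exI[of _ A]) (auto simp: emeasure_completion)
qed

interpretation lebesgue_pair: pair_sigma_finite "lebesgue :: real measure" "lebesgue :: real measure"
  by (simp add: pair_sigma_finite_def sigma_finite_lebesgue)

lemma measurable_ident_lebesgue [measurable]: "(\<lambda>x::real. x) \<in> borel_measurable lebesgue"
  by (rule measurable_completion) simp

lemma measurable_fst_lebesgue_pair [measurable]:
  "(fst :: real \<times> real \<Rightarrow> real) \<in> borel_measurable (lebesgue \<Otimes>\<^sub>M lebesgue)"
  using measurable_compose[OF measurable_fst measurable_ident_lebesgue] by simp

lemma measurable_snd_lebesgue_pair [measurable]: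
  "(snd :: real \<times> real \<Rightarrow> real) \<in> borel_measurable (lebesgue \<Otimes>\<^sub>M lebesgue)"
  using measurable_compose[OF measurable_snd measurable_ident_lebesgue] by simp

lemma set_integral_sin_Icc:
  fixes a b w :: real
  assumes "a \<le> b" "w \<noteq> 0"
  shows "(\<integral>x\<in>{a..b}. sin (w * x) \<partial>lebesgue) = (cos (w * a) - cos (w * b)) / w"
proof -
  have "((\<lambda>x. sin (w * x)) has_integral (- cos (w * b) / w - - cos (w * a) / w)) {a..b}"
    using assms
    by (intro fundamental_theorem_of_calculus)
       (auto intro!: derivative_eq_intros simp: has_real_derivative_iff_has_vector_derivative[symmetric])
  moreover have "set_integrable lebesgue {a..b} (\<lambda>x. sin (w * x))"
    by (intro absolutely_integrable_continuous_real continuous_intros)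
  ultimately show ?thesis
    by (simp add: set_lebesgue_integral_eq_integral integral_unique diff_divide_distrib)
qed

lemma integrable_triangle_sin_kernel:
  fixes G :: "real \<Rightarrow> real" and L w :: real
  assumes L: "0 \<le> L" and G: "integrable lebesgue G"
  shows "integrable (lebesgue \<Otimes>\<^sub>M lebesgue)
    (\<lambda>(x, y). indicator {0..L} x * (if y \<le> x then 1 else 0) * sin (w * x) * G y)"
proof -
  have [measurable]: "G \<in> borel_measurable lebesgue"
    using G by (rule borel_measurable_integrable)
  define h where "h = (\<lambda>(x::real, y::real). indicator {0..L} x * \<bar>G y\<bar>)"
  have [measurable]: "h \<in> borel_measurable (lebesgue \<Otimes>\<^sub>M lebesgue)"
    unfolding h_def by measurable
  have "integrable (lebesgue \<Otimes>\<^sub>M lebesgue) h"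
  proof (rule lebesgue_pair.Fubini_integrable)
    have "integrable lebesgue (\<lambda>x. (\<integral>y. \<bar>G y\<bar> \<partial>lebesgue) * indicator {0..L} x)"
      using L by (intro integrable_mult_right integrable_real_indicator)
        (auto simp: emeasure_lborel_Icc)
    then show "integrable lebesgue (\<lambda>x. \<integral>y. norm (h (x, y)) \<partial>lebesgue)"
      unfolding h_def by (simp add: abs_mult mult.commute)
    show "AE x in lebesgue. integrable lebesgue (\<lambda>y. h (x, y))"
      unfolding h_def using G by auto
  qed (measurable)
  then show ?thesis
  proof (rule Bochner_Integration.integrable_bound, measurable, intro AE_I2)
    fix z :: "real \<times> real"
    show "norm ((\<lambda>(x, y). indicator {0..L} x * (if y \<le> x then 1 else 0) * sin (w * x) * G y) z)
        \<le> norm (h z)"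
      using abs_sin_le_one[of "w * fst z"] unfolding h_def
      by (cases z) (auto simp: abs_mult indicator_def intro: mult_left_le_one_le)
  qed
qed

text \<open>Integration by parts for a primitive of a merely integrable \<open>g\<close>, by Fubini on the
  triangle \<open>0 \<le> y \<le> x \<le> L\<close>.\<close>
lemma set_integral_primitive_mult_sin:
  fixes g F :: "real \<Rightarrow> real" and L w :: real
  assumes L: "0 \<le> L" and w: "w \<noteq> 0" and g: "set_integrable lebesgue {0..L} g"
    and F: "\<And>x. x \<in> {0..L} \<Longrightarrow> F x = (\<integral>y\<in>{0..x}. g y \<partial>lebesgue)"
  shows "(\<integral>x\<in>{0..L}. F x * sin (w * x) \<partial>lebesgue)
       = (\<integral>y\<in>{0..L}. g y * ((cos (w * y) - cos (w * L)) / w) \<partial>lebesgue)"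
proof -
  define G where "G y = indicator {0..L} y * g y" for y
  define f where "f x y = indicator {0..L} x * (if y \<le> x then 1 else 0) * sin (w * x) * G y" for x y :: real
  have "integrable lebesgue G"
    using g unfolding set_integrable_def G_def by simp
  then have "integrable (lebesgue \<Otimes>\<^sub>M lebesgue) (case_prod f)"
    unfolding f_def using integrable_triangle_sin_kernel[OF L] by simp
  then have Fubini: "(\<integral>y. (\<integral>x. f x y \<partial>lebesgue) \<partial>lebesgue) = (\<integral>x. (\<integral>y. f x y \<partial>lebesgue) \<partial>lebesgue)"
    by (rule lebesgue_pair.Fubini_integral)
  have inner_y: "(\<integral>y. f x y \<partial>lebesgue) = indicator {0..L} x * (F x * sin (w * x))" for x
  proof (cases "x \<in> {0..L}")
    case True
    then have "(\<lambda>y. f x y) = (\<lambda>y. sin (w * x) * (indicator {0..x} y * g y))"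
      unfolding f_def G_def by (auto simp: indicator_def)
    with True F[OF True] show ?thesis by (simp add: set_lebesgue_integral_def)
  qed (simp add: f_def)
  have inner_x: "(\<integral>x. f x y \<partial>lebesgue) = G y * ((cos (w * y) - cos (w * L)) / w)" for y
  proof (cases "y \<in> {0..L}")
    case True
    then have "(\<lambda>x. f x y) = (\<lambda>x. G y * (indicator {y..L} x * sin (w * x)))"
      unfolding f_def by (auto simp: indicator_def)
    with True set_integral_sin_Icc[of y L w] w show ?thesis
      by (simp add: set_lebesgue_integral_def)
  qed (simp add: f_def G_def)
  from Fubini show ?thesis
    unfolding inner_x inner_y set_lebesgue_integral_def G_def by (simp add: mult_ac)
qed

lemma has_integral_by_parts_within:
  fixes f f' g g' :: "real \<Rightarrow> real" and a b :: real
  assumes ab: "a \<le> b"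
    and f: "\<And>x. x \<in> {a..b} \<Longrightarrow> (f has_real_derivative f' x) (at x within {a..b})"
    and g: "\<And>x. x \<in> {a..b} \<Longrightarrow> (g has_real_derivative g' x) (at x within {a..b})"
    and g'_cont: "continuous_on {a..b} g'"
  shows "((\<lambda>x. f' x * g x) has_integral (f b * g b - f a * g a - integral {a..b} (\<lambda>x. f x * g' x))) {a..b}"
proof -
  have "((\<lambda>x. f' x * g x + f x * g' x) has_integral ((\<lambda>x. f x * g x) b - (\<lambda>x. f x * g x) a)) {a..b}"
    apply (rule fundamental_theorem_of_calculus[OF ab])
    unfolding has_real_derivative_iff_has_vector_derivative[symmetric]
    using f g by (auto intro!: derivative_eq_intros)
  moreover have "((\<lambda>x. f x * g' x) has_integral integral {a..b} (\<lambda>x. f x * g' x)) {a..b}"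
    using DERIV_continuous_on[of "{a..b}" f f'] f g'_cont
    by (intro integrable_integral integrable_continuous_real continuous_on_mult) auto
  ultimately have "((\<lambda>x. (f' x * g x + f x * g' x) - f x * g' x) has_integral
      (f b * g b - f a * g a - integral {a..b} (\<lambda>x. f x * g' x))) {a..b}"
    by (rule has_integral_diff)
  then show ?thesis by simp
qed

lemma integral_mult_cos_by_parts:
  fixes f f' :: "real \<Rightarrow> real" and L w :: real
  assumes L: "0 \<le> L" and w: "w \<noteq> 0" "sin (w * L) = 0"
    and f: "\<And>x. x \<in> {0..L} \<Longrightarrow> (f has_real_derivative f' x) (at x within {0..L})"
  shows "integral {0..L} (\<lambda>x. f x * cos (w * x)) = - (1 / w) * integral {0..L} (\<lambda>x. f' x * sin (w * x))"
proof -
  have "((\<lambda>x. f' x * (sin (w * x) / w)) has_integral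
      (f L * (sin (w * L) / w) - f 0 * (sin (w * 0) / w) - integral {0..L} (\<lambda>x. f x * cos (w * x)))) {0..L}"
    by (rule has_integral_by_parts_within[OF L f]) (use w in \<open>auto intro!: derivative_eq_intros continuous_intros\<close>)
  then have "((\<lambda>x. w * (f' x * (sin (w * x) / w))) has_integral
      (w * - integral {0..L} (\<lambda>x. f x * cos (w * x)))) {0..L}"
    using w(2) by (intro has_integral_mult_right) simp
  then have "integral {0..L} (\<lambda>x. f' x * sin (w * x)) = w * - integral {0..L} (\<lambda>x. f x * cos (w * x))"
    using w(1) by (simp add: integral_unique)
  then show ?thesis
    using w(1) by simp
qed

lemma integral_mult_sin_by_parts:
  fixes f f' :: "real \<Rightarrow> real" and L w :: real
  assumes L: "0 \<le> L" and w: "w \<noteq> 0" and f0: "f 0 = 0" and fL: "f L = 0"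
    and f: "\<And>x. x \<in> {0..L} \<Longrightarrow> (f has_real_derivative f' x) (at x within {0..L})"
  shows "integral {0..L} (\<lambda>x. f x * sin (w * x)) = (1 / w) * integral {0..L} (\<lambda>x. f' x * cos (w * x))"
proof -
  have "((\<lambda>x. f' x * (- cos (w * x) / w)) has_integral
      (f L * (- cos (w * L) / w) - f 0 * (- cos (w * 0) / w) - integral {0..L} (\<lambda>x. f x * sin (w * x)))) {0..L}"
    by (rule has_integral_by_parts_within[OF L f]) (use w in \<open>auto intro!: derivative_eq_intros continuous_intros\<close>)
  then have "((\<lambda>x. - w * (f' x * (- cos (w * x) / w))) has_integral
      (- w * - integral {0..L} (\<lambda>x. f x * sin (w * x)))) {0..L}"
    using f0 fL by (intro has_integral_mult_right) simp
  then have "integral {0..L} (\<lambda>x. f' x * cos (w * x)) = w * integral {0..L} (\<lambda>x. f x * sin (w * x))"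
    using w by (simp add: integral_unique)
  then show ?thesis
    using w by simp
qed

lemma abs_set_integral_mult_le:
  fixes g h :: "'a \<Rightarrow> real"
  assumes g: "set_integrable M A g" and h: "\<And>y. y \<in> A \<Longrightarrow> \<bar>h y\<bar> \<le> B"
  shows "\<bar>\<integral>y\<in>A. g y * h y \<partial>M\<bar> \<le> B * (\<integral>y\<in>A. \<bar>g y\<bar> \<partial>M)"
proof -
  have "\<bar>\<integral>y\<in>A. g y * h y \<partial>M\<bar> \<le> (\<integral>y. norm (indicator A y *\<^sub>R (g y * h y)) \<partial>M)"
    unfolding set_lebesgue_integral_def real_norm_def[symmetric] by (rule integral_norm_bound)
  also have "\<dots> \<le> (\<integral>y\<in>A. \<bar>g y\<bar> * B \<partial>M)"
    unfolding set_lebesgue_integral_def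
  proof (rule integral_mono')
    show "integrable M (\<lambda>y. indicator A y *\<^sub>R (\<bar>g y\<bar> * B))"
      using set_integrable_mult_left[OF set_integrable_abs[OF g]] unfolding set_integrable_def .
    fix y
    show "norm (indicator A y *\<^sub>R (g y * h y)) \<le> indicator A y *\<^sub>R (\<bar>g y\<bar> * B)"
      "0 \<le> indicator A y *\<^sub>R (\<bar>g y\<bar> * B)"
      using h[of y] abs_ge_zero[of "h y"]
      by (auto simp: indicator_def abs_mult intro: mult_left_mono)
  qed
  finally show ?thesis
    by (simp add: mult.commute)
qed

lemma abs_integral_primitive_mult_sin_le:
  fixes g F :: "real \<Rightarrow> real" and L w :: real
  assumes L: "0 \<le> L" and w: "w > 0" and g: "set_integrable lebesgue {0..L} g"
    and F: "\<And>x. x \<in> {0..L} \<Longrightarrow> F x = (\<integral>y\<in>{0..x}. g y \<partial>lebesgue)"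
  shows "\<bar>integral {0..L} (\<lambda>x. F x * sin (w * x))\<bar> \<le> 2 / w * (\<integral>y\<in>{0..L}. \<bar>g y\<bar> \<partial>lebesgue)"
proof -
  have "continuous_on {0..L} (\<lambda>x. integral {0..x} g)"
    using g by (intro indefinite_integral_continuous_1) (simp add: set_lebesgue_integral_eq_integral)
  moreover have "integral {0..x} g = F x" if "x \<in> {0..L}" for x
  proof -
    have "set_integrable lebesgue {0..x} g"
      by (rule set_integrable_subset[OF g]) (use that in auto)
    then show ?thesis
      using F[OF that] by (simp add: set_lebesgue_integral_eq_integral)
  qed
  ultimately have "continuous_on {0..L} F"
    by (rule continuous_on_eq)
  then have "set_integrable lebesgue {0..L} (\<lambda>x. F x * sin (w * x))"
    by (intro absolutely_integrable_continuous_real continuous_intros)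
  then have "integral {0..L} (\<lambda>x. F x * sin (w * x)) = (\<integral>x\<in>{0..L}. F x * sin (w * x) \<partial>lebesgue)"
    by (simp add: set_lebesgue_integral_eq_integral)
  also have "\<dots> = (\<integral>y\<in>{0..L}. g y * ((cos (w * y) - cos (w * L)) / w) \<partial>lebesgue)"
    using w by (intro set_integral_primitive_mult_sin[OF L _ g F]) auto
  also have "\<bar>\<dots>\<bar> \<le> 2 / w * (\<integral>y\<in>{0..L}. \<bar>g y\<bar> \<partial>lebesgue)"
  proof (rule abs_set_integral_mult_le[OF g])
    fix y
    have "\<bar>cos (w * y) - cos (w * L)\<bar> \<le> 2"
      using abs_cos_le_one[of "w * y"] abs_cos_le_one[of "w * L"] by linarith
    then show "\<bar>(cos (w * y) - cos (w * L)) / w\<bar> \<le> 2 / w"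
      using w by (simp add: divide_right_mono)
  qed
  finally show ?thesis .
qed

text \<open>Five integrations by parts, whose boundary terms vanish by \<open>sin (w * L) = 0\<close> and the
  Neumann conditions on \<open>D 1\<close>, \<open>D 3\<close>, \<open>D 5\<close>, and a sixth one by Fubini.\<close>
lemma abs_integral_mult_cos_le:
  fixes f :: "real \<Rightarrow> real" and D :: "nat \<Rightarrow> real \<Rightarrow> real"
  assumes D: "sobolev6_reps L f D"
    and Neumann: "D 1 0 = 0" "D 1 L = 0" "D 3 0 = 0" "D 3 L = 0" "D 5 0 = 0" "D 5 L = 0"
    and L: "0 \<le> L" and w: "w > 0" "sin (w * L) = 0"
  shows "\<bar>integral {0..L} (\<lambda>x. D 0 x * cos (w * x))\<bar> \<le> 2 / w ^ 6 * (\<integral>y\<in>{0..L}. \<bar>D 6 y\<bar> \<partial>lebesgue)"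
proof -
  have deriv: "(D k has_real_derivative D (Suc k) x) (at x within {0..L})" if "k < 5" "x \<in> {0..L}" for k x
    using D that unfolding sobolev6_reps_def by blast
  have D6: "set_integrable lebesgue {0..L} (D 6)"
    using D unfolding sobolev6_reps_def by blast
  have D5: "D 5 x = (\<integral>y\<in>{0..x}. D 6 y \<partial>lebesgue)" if "x \<in> {0..L}" for x
  proof -
    have "D 5 x = D 5 0 + (\<integral>y\<in>{0..x}. D 6 y \<partial>lebesgue)"
      using D that unfolding sobolev6_reps_def by blast
    with Neumann(5) show ?thesis by simp
  qed
  have "w \<noteq> 0" using w by simp
  note by_parts = integral_mult_cos_by_parts[OF L this w(2)] integral_mult_sin_by_parts[OF L this]
  have "integral {0..L} (\<lambda>x. D 0 x * cos (w * x)) = - integral {0..L} (\<lambda>x. D 5 x * sin (w * x)) / w ^ 5"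
    using by_parts(1)[OF deriv[of 0]] by_parts(2)[OF Neumann(1,2) deriv[of 1]]
      by_parts(1)[OF deriv[of 2]] by_parts(2)[OF Neumann(3,4) deriv[of 3]] by_parts(1)[OF deriv[of 4]]
    by (simp add: eval_nat_numeral field_simps)
  then have "\<bar>integral {0..L} (\<lambda>x. D 0 x * cos (w * x))\<bar> = \<bar>integral {0..L} (\<lambda>x. D 5 x * sin (w * x))\<bar> / w ^ 5"
    using w by (simp add: abs_divide)
  also have "\<dots> \<le> 2 / w * (\<integral>y\<in>{0..L}. \<bar>D 6 y\<bar> \<partial>lebesgue) / w ^ 5"
    using w by (intro divide_right_mono abs_integral_primitive_mult_sin_le[OF L _ D6 D5]) auto
  also have "\<dots> = 2 / w ^ 6 * (\<integral>y\<in>{0..L}. \<bar>D 6 y\<bar> \<partial>lebesgue)"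
    using w by (simp add: eval_nat_numeral field_simps)
  finally show ?thesis .
qed

lemma alpha_eq_integral_mult_cos:
  assumes D: "sobolev6_reps L u0 D" and L: "L > 0" and p: "p \<ge> 1"
  shows "alpha L u0 p = sqrt 2 / L * integral {0..L} (\<lambda>x. D 0 x * cos (real p * pi / L * x))"
proof -
  define w where "w = real p * pi / L"
  have cfun: "cfun L p x = sqrt 2 * cos (w * x)" for x
    using p unfolding cfun_def w_def by (simp add: mult_ac)
  have "(D 0 has_real_derivative D 1 x) (at x within {0..L})" if "x \<in> {0..L}" for x
    using D that unfolding sobolev6_reps_def by (metis One_nat_def zero_less_numeral)
  then have "continuous_on {0..L} (D 0)"
    by (rule DERIV_continuous_on)
  then have D0_int: "set_integrable lebesgue {0..L} (\<lambda>x. D 0 x * cfun L p x)"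
    unfolding cfun by (intro absolutely_integrable_continuous_real continuous_intros)
  have "AE x in lebesgue. x \<in> {0..L} \<longrightarrow> u0 x = D 0 x"
    using D unfolding sobolev6_reps_def by blast
  then obtain N where N: "{x \<in> space lebesgue. \<not> (x \<in> {0..L} \<longrightarrow> u0 x = D 0 x)} \<subseteq> N"
      "N \<in> null_sets lebesgue"
    by (rule AE_E) (blast intro: null_setsI)
  then have N_negligible: "negligible N"
    by (simp add: negligible_iff_null_sets)
  have eq: "u0 x * cfun L p x = D 0 x * cfun L p x" if "x \<in> {0..L} - N" for x
    using that N(1) by auto
  have "set_integrable lebesgue {0..L} (\<lambda>x. u0 x * cfun L p x)"
    by (rule absolutely_integrable_spike[OF D0_int N_negligible eq])
  then have "alpha L u0 p = (1 / L) * integral {0..L} (\<lambda>x. u0 x * cfun L p x)"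
    unfolding alpha_def by (simp add: set_lebesgue_integral_eq_integral)
  also have "integral {0..L} (\<lambda>x. u0 x * cfun L p x) = integral {0..L} (\<lambda>x. D 0 x * cfun L p x)"
    by (rule integral_spike[OF N_negligible]) (simp add: eq)
  also have "\<dots> = sqrt 2 * integral {0..L} (\<lambda>x. D 0 x * cos (w * x))"
    unfolding cfun mult.left_commute[of "D 0 _"] by (rule integral_mult_right)
  finally show ?thesis
    unfolding w_def by simp
qed

lemma alpha_decay:
  assumes L: "L > 0" and u0: "iter_dom_P L u0"
  shows "\<exists>K. \<forall>p\<ge>1. \<bar>alpha L u0 p\<bar> \<le> K / real p ^ 6"
proof -
  obtain D where D: "sobolev6_reps L u0 D"
    and Neumann: "D 1 0 = 0" "D 1 L = 0" "D 3 0 = 0" "D 3 L = 0" "D 5 0 = 0" "D 5 L = 0"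
    using u0 unfolding iter_dom_P_def by blast
  define A where "A = (\<integral>y\<in>{0..L}. \<bar>D 6 y\<bar> \<partial>lebesgue)"
  have "\<bar>alpha L u0 p\<bar> \<le> 2 * sqrt 2 * A * L ^ 5 / pi ^ 6 / real p ^ 6" if p: "p \<ge> 1" for p
  proof -
    define w where "w = real p * pi / L"
    have w: "w > 0" "sin (w * L) = 0"
      using L p unfolding w_def by simp_all
    have "\<bar>alpha L u0 p\<bar> = sqrt 2 / L * \<bar>integral {0..L} (\<lambda>x. D 0 x * cos (w * x))\<bar>"
      using alpha_eq_integral_mult_cos[OF D L p] L unfolding w_def by (simp add: abs_mult)
    also have "\<dots> \<le> sqrt 2 / L * (2 / w ^ 6 * A)"
      unfolding A_def using abs_integral_mult_cos_le[OF D Neumann _ w] L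
      by (intro mult_left_mono) auto
    also have "\<dots> = 2 * sqrt 2 * A * L ^ 5 / pi ^ 6 / real p ^ 6"
    proof -
      have w6: "w ^ 6 = real p ^ 6 * pi ^ 6 / (L * L ^ 5)"
        unfolding w_def by (simp add: power_divide power_mult_distrib flip: power_Suc)
      show ?thesis
        unfolding w6 using L p by (simp add: field_simps)
    qed
    finally show ?thesis .
  qed
  then show ?thesis by blast
qed

lemma summable_abs_alpha_mult_power4:
  assumes "L > 0" and "iter_dom_P L u0"
  shows "summable (\<lambda>p. \<bar>alpha L u0 p\<bar> * real p ^ 4)"
proof -
  obtain K where K: "\<And>p. p \<ge> 1 \<Longrightarrow> \<bar>alpha L u0 p\<bar> \<le> K / real p ^ 6"
    using alpha_decay[OF assms] by blast
  show ?thesis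
  proof (rule summable_comparison_test')
    show "summable (\<lambda>p. K * inverse (real p ^ 2))"
      by (intro summable_mult inverse_power_summable) simp
    fix p :: nat
    assume "p \<ge> 1"
    then have "\<bar>alpha L u0 p\<bar> * real p ^ 4 \<le> K / real p ^ 6 * real p ^ 4"
      using K by (intro mult_right_mono) auto
    also have "\<dots> = K * inverse (real p ^ 2)"
    proof -
      have "real p ^ 6 = real p ^ 4 * real p ^ 2" by (simp flip: power_add)
      then show ?thesis using \<open>p \<ge> 1\<close> by (simp add: field_simps)
    qed
    finally show "norm (\<bar>alpha L u0 p\<bar> * real p ^ 4) \<le> K * inverse (real p ^ 2)"
      by simp
  qed
qed

section \<open>Termwise differentiation of cosine series\<close>

text \<open>\<open>cos_series a \<omega> k\<close> is the \<open>k\<close>-th termwise derivative of \<open>\<Sum>p. a p * cos (\<omega> p * x)\<close>: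
  the \<open>k\<close>-th derivative of \<open>cos \<theta>\<close> is \<open>cos (\<theta> + k\<pi>/2)\<close>.\<close>
definition cos_series :: "(nat \<Rightarrow> real) \<Rightarrow> (nat \<Rightarrow> real) \<Rightarrow> nat \<Rightarrow> real \<Rightarrow> real" where
  "cos_series a \<omega> k x = (\<Sum>p. a p * \<omega> p ^ k * cos (\<omega> p * x + real k * pi / 2))"

lemma summable_abs_mult_power_le:
  fixes a \<omega> :: "nat \<Rightarrow> real"
  assumes "summable (\<lambda>p. \<bar>a p\<bar>)" "summable (\<lambda>p. \<bar>a p\<bar> * \<omega> p ^ m)"
    and \<omega>: "\<And>p. \<omega> p \<ge> 0" and "k \<le> m"
  shows "summable (\<lambda>p. \<bar>a p\<bar> * \<omega> p ^ k)"
proof (rule summable_comparison_test')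
  show "summable (\<lambda>p. \<bar>a p\<bar> + \<bar>a p\<bar> * \<omega> p ^ m)"
    using assms(1,2) by (rule summable_add)
  fix p :: nat
  have "\<omega> p ^ k \<le> 1 + \<omega> p ^ m"
  proof (cases "\<omega> p \<le> 1")
    case True
    then show ?thesis using \<omega>[of p] power_le_one[of "\<omega> p" k] zero_le_power[of "\<omega> p" m] by linarith
  next
    case False
    then have "\<omega> p ^ k \<le> \<omega> p ^ m"
      using \<open>k \<le> m\<close> by (intro power_increasing) auto
    then show ?thesis by simp
  qed
  then have "\<bar>a p\<bar> * \<omega> p ^ k \<le> \<bar>a p\<bar> * (1 + \<omega> p ^ m)"
    by (rule mult_left_mono) simp
  then show "norm (\<bar>a p\<bar> * \<omega> p ^ k) \<le> \<bar>a p\<bar> + \<bar>a p\<bar> * \<omega> p ^ m"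
    using \<omega>[of p] by (simp add: algebra_simps)
qed

lemma has_real_derivative_cos_series:
  fixes a \<omega> :: "nat \<Rightarrow> real"
  assumes summable: "summable (\<lambda>p. \<bar>a p\<bar>)" "summable (\<lambda>p. \<bar>a p\<bar> * \<omega> p ^ m)"
    and \<omega>: "\<And>p. \<omega> p \<ge> 0" and k: "k < m"
  shows "(cos_series a \<omega> k has_real_derivative cos_series a \<omega> (Suc k) x) (at x)"
proof -
  define f where "f p y = a p * \<omega> p ^ k * cos (\<omega> p * y + real k * pi / 2)" for p y
  define f' where "f' p y = a p * \<omega> p ^ Suc k * cos (\<omega> p * y + real (Suc k) * pi / 2)" for p y
  have "(f p has_field_derivative f' p y) (at y within UNIV)" for p y
  proof -
    have "\<omega> p * y + real (Suc k) * pi / 2 = (\<omega> p * y + real k * pi / 2) + pi / 2"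
      by (simp add: algebra_simps add_divide_distrib)
    then have "cos (\<omega> p * y + real (Suc k) * pi / 2) = - sin (\<omega> p * y + real k * pi / 2)"
      by (simp only: cos_add cos_pi_half sin_pi_half)
    then show ?thesis
      unfolding f_def f'_def by (auto intro!: derivative_eq_intros simp: algebra_simps)
  qed
  moreover have "uniformly_convergent_on UNIV (\<lambda>n y. \<Sum>p<n. f' p y)"
  proof (rule Weierstrass_m_test')
    show "summable (\<lambda>p. \<bar>a p\<bar> * \<omega> p ^ Suc k)"
      using k by (intro summable_abs_mult_power_le[OF summable \<omega>]) simp
    show "norm (f' p y) \<le> \<bar>a p\<bar> * \<omega> p ^ Suc k" for p y
      unfolding f'_def using \<omega>[of p] abs_cos_le_one[of "\<omega> p * y + real (Suc k) * pi / 2"]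
      by (simp add: abs_mult mult_left_le del: power_Suc)
  qed
  moreover have "summable (\<lambda>p. f p 0)"
  proof (rule summable_comparison_test')
    show "summable (\<lambda>p. \<bar>a p\<bar> * \<omega> p ^ k)"
      using k by (intro summable_abs_mult_power_le[OF summable \<omega>]) simp
    show "norm (f p 0) \<le> \<bar>a p\<bar> * \<omega> p ^ k" for p
      unfolding f_def using \<omega>[of p] abs_cos_le_one[of "real k * pi / 2"]
      by (simp add: abs_mult mult_left_le)
  qed
  ultimately have "((\<lambda>y. \<Sum>p. f p y) has_field_derivative (\<Sum>p. f' p x)) (at x)"
    by (intro has_field_derivative_series'(2)[OF convex_UNIV]) auto
  then show ?thesis
    unfolding cos_series_def f_def f'_def .
qed

lemma higher_deriv_cos_series:
  fixes a \<omega> :: "nat \<Rightarrow> real"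
  assumes "summable (\<lambda>p. \<bar>a p\<bar>)" "summable (\<lambda>p. \<bar>a p\<bar> * \<omega> p ^ m)"
    and "\<And>p. \<omega> p \<ge> 0"
  shows "k \<le> m \<Longrightarrow> (deriv ^^ k) (cos_series a \<omega> 0) = cos_series a \<omega> k"
proof (induction k)
  case (Suc k)
  then have "(deriv ^^ Suc k) (cos_series a \<omega> 0) = deriv (cos_series a \<omega> k)"
    by simp
  also have "\<dots> = cos_series a \<omega> (Suc k)"
    using has_real_derivative_cos_series[OF assms] Suc.prems by (auto intro!: ext DERIV_imp_deriv)
  finally show ?case .
qed simp

lemma abs_cos_series_le:
  fixes a \<omega> :: "nat \<Rightarrow> real"
  assumes summable: "summable (\<lambda>p. \<bar>a p\<bar> * \<omega> p ^ k)" and \<omega>: "\<And>p. \<omega> p \<ge> 0"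
  shows "\<bar>cos_series a \<omega> k x\<bar> \<le> (\<Sum>p. \<bar>a p\<bar> * \<omega> p ^ k)"
proof -
  have bound: "\<bar>a p * \<omega> p ^ k * cos (\<omega> p * x + real k * pi / 2)\<bar> \<le> \<bar>a p\<bar> * \<omega> p ^ k" for p
    using \<omega>[of p] abs_cos_le_one[of "\<omega> p * x + real k * pi / 2"]
    by (simp add: abs_mult mult_left_le)
  then have "summable (\<lambda>p. \<bar>a p * \<omega> p ^ k * cos (\<omega> p * x + real k * pi / 2)\<bar>)"
    by (intro summable_comparison_test'[OF summable]) simp
  then have "\<bar>cos_series a \<omega> k x\<bar> \<le> (\<Sum>p. \<bar>a p * \<omega> p ^ k * cos (\<omega> p * x + real k * pi / 2)\<bar>)"
    unfolding cos_series_def by (rule summable_rabs)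
  also have "\<dots> \<le> (\<Sum>p. \<bar>a p\<bar> * \<omega> p ^ k)"
    using bound \<open>summable (\<lambda>p. \<bar>_\<bar>)\<close> summable by (rule suminf_le)
  finally show ?thesis .
qed

lemma heat_sol_eq_cos_series:
  "heat_sol L u0 t = cos_series
     (\<lambda>p. alpha L u0 p * exp (- ((real p)^2 * pi^2 * t / L^2)) * (if p = 0 then 1 else sqrt 2))
     (\<lambda>p. real p * pi / L) 0"
  unfolding heat_sol_def cos_series_def cfun_def by (intro ext arg_cong[where f = suminf]) (auto simp: mult_ac)

lemma summable_abs_alpha:
  assumes "summable (\<lambda>p. \<bar>alpha L u0 p\<bar> * real p ^ 4)"
  shows "summable (\<lambda>p. \<bar>alpha L u0 p\<bar>)"
proof (rule summable_comparison_test'[OF assms, where N = 1])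
  fix p :: nat
  assume "p \<ge> 1"
  then show "norm \<bar>alpha L u0 p\<bar> \<le> \<bar>alpha L u0 p\<bar> * real p ^ 4"
    by (simp add: mult_le_cancel_left1)
qed

lemma abs_deriv4_heat_sol_le:
  fixes L t :: real
  assumes L: "L > 0" and t: "t \<ge> 0" and summable: "summable (\<lambda>p. \<bar>alpha L u0 p\<bar> * real p ^ 4)"
  shows "\<bar>(deriv ^^ 4) (heat_sol L u0 t) y\<bar>
    \<le> sqrt 2 * (pi / L) ^ 4 * (\<Sum>p. \<bar>alpha L u0 p\<bar> * real p ^ 4 * exp (- ((real p)^2 * pi^2 * t / L^2)))"
proof -
  define e where "e p = exp (- ((real p)^2 * pi^2 * t / L^2))" for p
  define a where "a p = alpha L u0 p * e p * (if p = 0 then 1 else sqrt 2)" for p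
  define \<omega> where "\<omega> p = real p * pi / L" for p
  have \<omega>: "\<omega> p \<ge> 0" for p
    unfolding \<omega>_def using L by simp
  have e: "0 < e p" "e p \<le> 1" for p
    unfolding e_def using L t by auto
  have "summable (\<lambda>p. \<bar>a p\<bar>)"
  proof (rule summable_comparison_test')
    show "summable (\<lambda>p. sqrt 2 * \<bar>alpha L u0 p\<bar>)"
      using summable_abs_alpha[OF summable] by (rule summable_mult)
    fix p
    have "\<bar>a p\<bar> = \<bar>alpha L u0 p\<bar> * (e p * (if p = 0 then 1 else sqrt 2))"
      unfolding a_def using e[of p] by (simp add: abs_mult)
    also have "\<dots> \<le> \<bar>alpha L u0 p\<bar> * (1 * sqrt 2)"
      using e[of p] by (intro mult_left_mono mult_mono) auto
    finally show "norm \<bar>a p\<bar> \<le> sqrt 2 * \<bar>alpha L u0 p\<bar>"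
      by (simp add: mult.commute)
  qed
  moreover have a\<omega>: "\<bar>a p\<bar> * \<omega> p ^ 4 = sqrt 2 * (pi / L) ^ 4 * (\<bar>alpha L u0 p\<bar> * real p ^ 4 * e p)" for p
    unfolding a_def \<omega>_def using e[of p] L
    by (cases "p = 0") (simp_all add: abs_mult power_divide power_mult_distrib mult_ac)
  moreover have summable_e: "summable (\<lambda>p. \<bar>alpha L u0 p\<bar> * real p ^ 4 * e p)"
    using e by (intro summable_comparison_test'[OF summable]) (simp add: abs_mult abs_of_pos mult_left_le)
  ultimately have "(deriv ^^ 4) (heat_sol L u0 t) = cos_series a \<omega> 4"
    unfolding heat_sol_eq_cos_series e_def[symmetric] a_def[symmetric] \<omega>_def[symmetric]
    by (intro higher_deriv_cos_series[OF _ _ \<omega>]) (auto intro: summable_mult)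
  moreover have "\<bar>cos_series a \<omega> 4 y\<bar> \<le> (\<Sum>p. \<bar>a p\<bar> * \<omega> p ^ 4)"
    using a\<omega> summable_e by (intro abs_cos_series_le[OF _ \<omega>]) (auto intro: summable_mult)
  moreover have "(\<Sum>p. \<bar>a p\<bar> * \<omega> p ^ 4) = sqrt 2 * (pi / L) ^ 4 * (\<Sum>p. \<bar>alpha L u0 p\<bar> * real p ^ 4 * e p)"
    unfolding a\<omega> by (rule suminf_mult[OF summable_e])
  ultimately show ?thesis
    by (simp add: e_def)
qed

lemma abs_LBINT_01_le:
  fixes h :: "real \<Rightarrow> real"
  assumes bound: "\<And>s. s \<in> {0..1} \<Longrightarrow> \<bar>h s\<bar> \<le> B"
  shows "\<bar>LBINT s=0..1. h s\<bar> \<le> B"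
proof -
  have "B \<ge> 0" using bound[of 0] by simp
  have "(LBINT s=0..1. h s) = (\<integral>s. indicator {0..1} s *\<^sub>R h s \<partial>lborel)"
    using interval_integral_Icc[of 0 1 h] by (simp add: set_lebesgue_integral_def zero_ereal_def one_ereal_def)
  also have "\<bar>\<dots>\<bar> \<le> (\<integral>s. norm (indicator {0..1} s *\<^sub>R h s) \<partial>lborel)"
    unfolding real_norm_def[symmetric] by (rule integral_norm_bound)
  also have "\<dots> \<le> (\<integral>s. B * indicator {0..1::real} s \<partial>lborel)"
  proof (rule integral_mono')
    show "integrable lborel (\<lambda>s. B * indicator {0..1::real} s)"
      by (intro integrable_mult_right integrable_real_indicator) auto
    show "norm (indicator {0..1} s *\<^sub>R h s) \<le> B * indicator {0..1::real} s" for s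
      using bound[of s] by (auto simp: indicator_def)
    show "0 \<le> B * indicator {0..1::real} s" for s
      using \<open>B \<ge> 0\<close> by simp
  qed
  also have "\<dots> = B" by simp
  finally show ?thesis .
qed

lemma abs_L2delta_le:
  assumes bound: "\<And>y. \<bar>(deriv ^^ 4) w y\<bar> \<le> B"
  shows "\<bar>L2delta J dx w j\<bar> \<le> B / 3"
proof -
  have weighted: "\<bar>c * (deriv ^^ 4) w y\<bar> \<le> B" if "\<bar>c\<bar> \<le> 1" for c y
    using mult_mono[OF that bound[of y]] by (simp add: abs_mult)
  have "\<bar>(1 - s) ^ 3\<bar> \<le> 1" "\<bar>(s - 1) ^ 3\<bar> \<le> 1" if "s \<in> {0..1}" for s :: real
    using that by (auto simp: power_abs intro!: power_le_one)
  then have "\<bar>LBINT s=0..1. (1 - s)^3 * (deriv ^^ 4) w (real j * dx + s * dx)\<bar> \<le> B"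
    "\<bar>LBINT s=0..1. (s - 1)^3 * (deriv ^^ 4) w (real j * dx - s * dx)\<bar> \<le> B"
    by (auto intro!: abs_LBINT_01_le weighted)
  moreover have "B \<ge> 0"
    using bound[of 0] by linarith
  ultimately show ?thesis
    unfolding L2delta_def by (auto simp: abs_mult)
qed

section \<open>Stability of the explicit scheme\<close>

lemma l2norm_triangle: "l2norm J (\<lambda>j. v j + w j) \<le> l2norm J v + l2norm J w"
proof -
  have "l2norm J u = sqrt (1 / real J) * L2_set u {..<J}" for u
    unfolding l2norm_def L2_set_def by (simp flip: real_sqrt_mult)
  then show ?thesis
    using L2_set_triangle_ineq[of v w "{..<J}"] by (simp add: distrib_left[symmetric] mult_left_mono)
qed

lemma l2norm_sum_le:
  assumes "finite K"
  shows "l2norm J (\<lambda>j. \<Sum>k\<in>K. V k j) \<le> (\<Sum>k\<in>K. l2norm J (V k))"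
  using assms
proof (induction K rule: finite_induct)
  case empty
  then show ?case by (simp add: l2norm_def)
next
  case (insert k K)
  then have "l2norm J (\<lambda>j. \<Sum>k\<in>insert k K. V k j) \<le> l2norm J (V k) + l2norm J (\<lambda>j. \<Sum>k\<in>K. V k j)"
    using l2norm_triangle[of J "V k"] by simp
  with insert show ?case by simp
qed

lemma l2norm_scale: "l2norm J (\<lambda>j. c * v j) = \<bar>c\<bar> * l2norm J v"
proof -
  have "(\<Sum>j<J. (c * v j)^2) = c^2 * (\<Sum>j<J. (v j)^2)"
    by (simp add: power_mult_distrib sum_distrib_left)
  then show ?thesis
    by (simp only: l2norm_def mult.left_commute[of "1 / real J" "c^2"] real_sqrt_mult real_sqrt_abs)
qed

lemma l2norm_le_bound:
  assumes J: "J > 0" and bound: "\<And>j. j < J \<Longrightarrow> \<bar>v j\<bar> \<le> B"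
  shows "l2norm J v \<le> B"
proof -
  have "B \<ge> 0" using bound[of 0] J by linarith
  have "(\<Sum>j<J. (v j)^2) \<le> (\<Sum>j<J. B^2)"
    using bound \<open>B \<ge> 0\<close> by (intro sum_mono) (metis abs_le_square_iff abs_of_nonneg lessThan_iff)
  then have "1 / real J * (\<Sum>j<J. (v j)^2) \<le> B^2"
    using J by (simp add: field_simps)
  then have "l2norm J v \<le> sqrt (B^2)"
    unfolding l2norm_def by (rule real_sqrt_le_mono)
  with \<open>B \<ge> 0\<close> show ?thesis by simp
qed

text \<open>\<open>dx\<^sup>2 * Pdelta\<close> is a difference of the fluxes \<open>v (i + 1) - v i\<close> across the
  cell faces, the Neumann conditions setting the fluxes through the two ends to zero.\<close>
lemma Pdelta_eq_flux_difference:
  assumes J: "2 \<le> J" and j: "j < J" and dx: "dx \<noteq> 0"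
  shows "dx^2 * Pdelta J dx v j
    = (if j < J - 1 then v (Suc j) - v j else 0) - (if 0 < j then v j - v (j - 1) else 0)"
proof (cases "j = 0")
  case True
  with J dx show ?thesis by (simp add: Pdelta_def)
next
  case False
  moreover have "Suc (J - 2) = J - 1"
    using J by simp
  ultimately show ?thesis
    using j dx by (cases "j = J - 1") (auto simp: Pdelta_def numeral_2_eq_2)
qed

lemma sum_mult_Pdelta:
  assumes "2 \<le> J" and "dx \<noteq> 0"
  shows "(\<Sum>j<J. v j * (dx^2 * Pdelta J dx v j)) = - (\<Sum>i<J - 1. (v (Suc i) - v i)^2)"
proof -
  define N where "N = J - 1"
  have J: "J = Suc N"
    using assms(1) unfolding N_def by simp
  define E where "E j = (if j < N then v (Suc j) - v j else 0)" for j
  define E' where "E' j = (if 0 < j then v j - v (j - 1) else 0)" for j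
  have "(\<Sum>j<J. v j * (dx^2 * Pdelta J dx v j)) = (\<Sum>j<J. v j * E j - v j * E' j)"
    using Pdelta_eq_flux_difference[OF assms(1) _ assms(2)]
    unfolding E_def E'_def N_def by (simp add: right_diff_distrib)
  also have "\<dots> = (\<Sum>j<Suc N. v j * E j) - (\<Sum>j<Suc N. v j * E' j)"
    unfolding J by (rule sum_subtractf)
  also have "(\<Sum>j<Suc N. v j * E j) = (\<Sum>i<N. v i * (v (Suc i) - v i))"
    unfolding E_def by simp
  also have "(\<Sum>j<Suc N. v j * E' j) = (\<Sum>i<N. v (Suc i) * (v (Suc i) - v i))"
    unfolding E'_def by (subst sum.lessThan_Suc_shift) simp
  also have "(\<Sum>i<N. v i * (v (Suc i) - v i)) - (\<Sum>i<N. v (Suc i) * (v (Suc i) - v i))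
      = (\<Sum>i<N. - ((v (Suc i) - v i)^2))"
    unfolding sum_subtractf[symmetric] by (simp add: power2_eq_square algebra_simps)
  finally show ?thesis
    unfolding N_def by (simp add: sum_negf)
qed

lemma sum_sq_Pdelta_le:
  assumes "2 \<le> J" and "dx \<noteq> 0"
  shows "(\<Sum>j<J. (dx^2 * Pdelta J dx v j)^2) \<le> 4 * (\<Sum>i<J - 1. (v (Suc i) - v i)^2)"
proof -
  define N where "N = J - 1"
  have J: "J = Suc N"
    using assms(1) unfolding N_def by simp
  define E where "E j = (if j < N then v (Suc j) - v j else 0)" for j
  define E' where "E' j = (if 0 < j then v j - v (j - 1) else 0)" for j
  have "(\<Sum>j<J. (dx^2 * Pdelta J dx v j)^2) = (\<Sum>j<J. (E j - E' j)^2)"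
    using Pdelta_eq_flux_difference[OF assms(1) _ assms(2)]
    unfolding E_def E'_def N_def by simp
  also have "\<dots> \<le> (\<Sum>j<J. 2 * (E j)^2 + 2 * (E' j)^2)"
  proof (rule sum_mono)
    fix j
    have "0 \<le> (E j + E' j)^2" by simp
    then show "(E j - E' j)^2 \<le> 2 * (E j)^2 + 2 * (E' j)^2"
      by (simp add: power2_eq_square algebra_simps)
  qed
  also have "\<dots> = 4 * (\<Sum>i<N. (v (Suc i) - v i)^2)"
  proof -
    have "(\<Sum>j<J. (E j)^2) = (\<Sum>i<N. (v (Suc i) - v i)^2)"
      unfolding J E_def by simp
    moreover have "(\<Sum>j<J. (E' j)^2) = (\<Sum>i<N. (v (Suc i) - v i)^2)"
      unfolding J E'_def by (subst sum.lessThan_Suc_shift) simp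
    ultimately show ?thesis
      by (simp add: sum.distrib sum_distrib_left[symmetric])
  qed
  finally show ?thesis
    unfolding N_def .
qed

text \<open>With \<open>r = dt / dx\<^sup>2\<close> and \<open>D\<close> the sum of the squared fluxes, the energy changes by
  \<open>- 2 r D + r\<^sup>2 \<Sum>(dx\<^sup>2 Pdelta v)\<^sup>2 \<le> - 2 r (1 - 2 r) D\<close>.\<close>
lemma sum_sq_scheme_step_le:
  assumes J: "2 \<le> J" and dx: "dx \<noteq> 0" and dt: "0 \<le> dt" and cfl: "dt / dx^2 \<le> 1/2"
  shows "(\<Sum>j<J. (scheme_step J dx dt v j)^2) \<le> (\<Sum>j<J. (v j)^2)"
proof -
  define r where "r = dt / dx^2"
  define q where "q j = dx^2 * Pdelta J dx v j" for j
  define D where "D = (\<Sum>i<J - 1. (v (Suc i) - v i)^2)"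
  have r: "0 \<le> r" "r \<le> 1/2"
    using dt cfl unfolding r_def by auto
  have "D \<ge> 0"
    unfolding D_def by (simp add: sum_nonneg)
  have "scheme_step J dx dt v j = v j + r * q j" for j
    unfolding scheme_step_def r_def q_def using dx by simp
  then have "(\<Sum>j<J. (scheme_step J dx dt v j)^2)
      = (\<Sum>j<J. (v j)^2) + 2 * r * (\<Sum>j<J. v j * q j) + r^2 * (\<Sum>j<J. (q j)^2)"
    by (simp add: power2_eq_square algebra_simps sum.distrib sum_distrib_left)
  also have "\<dots> \<le> (\<Sum>j<J. (v j)^2) + 2 * r * (- D) + r^2 * (4 * D)"
    using sum_mult_Pdelta[OF J dx] sum_sq_Pdelta_le[OF J dx]
    unfolding q_def D_def by (simp add: mult_left_mono)
  also have "\<dots> = (\<Sum>j<J. (v j)^2) - 2 * r * (1 - 2 * r) * D"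
    by (simp add: power2_eq_square algebra_simps)
  also have "\<dots> \<le> (\<Sum>j<J. (v j)^2)"
    using r \<open>D \<ge> 0\<close> by simp
  finally show ?thesis .
qed

lemma l2norm_scheme_step_funpow_le:
  assumes "2 \<le> J" and "dx \<noteq> 0" and "0 \<le> dt" and "dt / dx^2 \<le> 1/2"
  shows "l2norm J ((scheme_step J dx dt ^^ m) v) \<le> l2norm J v"
proof (induction m)
  case (Suc m)
  have "l2norm J ((scheme_step J dx dt ^^ Suc m) v) \<le> l2norm J ((scheme_step J dx dt ^^ m) v)"
    unfolding l2norm_def funpow.simps o_apply
    using sum_sq_scheme_step_le[OF assms] by (intro real_sqrt_le_mono mult_left_mono) auto
  with Suc.IH show ?case by simp
qed simp

section \<open>The propagated consistency error\<close>

lemma l2norm_duhamel_sum_le: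
  assumes "2 \<le> J" and "dx \<noteq> 0" and "0 \<le> dt" and "dt / dx^2 \<le> 1/2"
  shows "l2norm J (\<lambda>j. dt * (\<Sum>k<n. (scheme_step J dx dt ^^ (n - 1 - k)) (w k) j))
    \<le> dt * (\<Sum>k<n. l2norm J (w k))"
proof -
  have "l2norm J (\<lambda>j. dt * (\<Sum>k<n. (scheme_step J dx dt ^^ (n - 1 - k)) (w k) j))
      = dt * l2norm J (\<lambda>j. \<Sum>k<n. (scheme_step J dx dt ^^ (n - 1 - k)) (w k) j)"
    using assms(3) by (simp add: l2norm_scale)
  also have "\<dots> \<le> dt * (\<Sum>k<n. l2norm J ((scheme_step J dx dt ^^ (n - 1 - k)) (w k)))"
    using assms(3) by (intro mult_left_mono l2norm_sum_le) auto
  also have "\<dots> \<le> dt * (\<Sum>k<n. l2norm J (w k))"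
    using assms by (intro mult_left_mono sum_mono l2norm_scheme_step_funpow_le) auto
  finally show ?thesis .
qed

lemma l2norm_L2delta_heat_sol_le:
  assumes L: "L > 0" and t: "t \<ge> 0" and J: "J > 0"
    and summable: "summable (\<lambda>p. \<bar>alpha L u0 p\<bar> * real p ^ 4)"
  shows "l2norm J (\<lambda>i. dx^2 * L2delta J dx (heat_sol L u0 t) i)
    \<le> dx^2 * (sqrt 2 * (pi / L) ^ 4 / 3)
        * (\<Sum>p. \<bar>alpha L u0 p\<bar> * real p ^ 4 * exp (- ((real p)^2 * pi^2 * t / L^2)))"
proof -
  have "l2norm J (L2delta J dx (heat_sol L u0 t))
      \<le> sqrt 2 * (pi / L) ^ 4 * (\<Sum>p. \<bar>alpha L u0 p\<bar> * real p ^ 4 * exp (- ((real p)^2 * pi^2 * t / L^2))) / 3"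
    using abs_deriv4_heat_sol_le[OF L t summable] by (intro l2norm_le_bound[OF J] abs_L2delta_le)
  then show ?thesis
    by (simp add: l2norm_scale mult_left_mono mult.assoc)
qed

lemma dt_sum_exp_power_le:
  fixes lam dt :: real
  assumes "lam > 0" and "dt > 0"
  shows "dt * (\<Sum>k<n. exp (- (lam * dt)) ^ k) \<le> dt + 1 / lam"
proof -
  define x where "x = lam * dt"
  define q where "q = exp (- x)"
  have x: "x > 0" and q: "0 < q" "q < 1"
    using assms unfolding x_def q_def by auto
  have "(\<Sum>k<n. q ^ k) = (1 - q ^ n) / (1 - q)"
    using q by (simp add: sum_gp_strict)
  also have "\<dots> \<le> 1 / (1 - q)"
    using q by (intro divide_right_mono) auto
  also have "\<dots> \<le> (1 + x) / x"
  proof -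
    have "q * (1 + x) \<le> q * exp x"
      using q by (intro mult_left_mono exp_ge_add_one_self) auto
    moreover have "q * exp x = 1"
      unfolding q_def by (simp flip: exp_add)
    ultimately have "q * (1 + x) \<le> 1"
      by simp
    then show ?thesis
      using q x by (simp add: field_simps)
  qed
  finally have "dt * (\<Sum>k<n. q ^ k) \<le> dt * ((1 + x) / x)"
    using assms(2) by (intro mult_left_mono) auto
  also have "\<dots> = dt + 1 / lam"
    unfolding x_def using assms by (simp add: field_simps)
  finally show ?thesis
    unfolding q_def x_def .
qed

text \<open>Each mode \<open>p \<ge> 1\<close> decays at rate at least \<open>\<pi>\<^sup>2 / L\<^sup>2\<close>, so its Riemann sum in time is
  bounded by \<open>dt + L\<^sup>2 / \<pi>\<^sup>2\<close> uniformly in \<open>n\<close>; the mode \<open>p = 0\<close> does not decay and must vanish.\<close>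
lemma dt_sum_heat_modes_le:
  fixes L dt :: real and c :: "nat \<Rightarrow> real"
  assumes L: "L > 0" and dt: "0 < dt" "dt < 1"
    and c: "\<And>p. c p \<ge> 0" "c 0 = 0" "summable c"
  shows "dt * (\<Sum>k<n. \<Sum>p. c p * exp (- ((real p)^2 * pi^2 * (real k * dt) / L^2)))
    \<le> (1 + L^2 / pi^2) * (\<Sum>p. c p)"
proof -
  define lam where "lam p = (real p)^2 * pi^2 / L^2" for p
  define T where "T p k = c p * exp (- (lam p * dt)) ^ k" for p k
  have T_eq: "c p * exp (- ((real p)^2 * pi^2 * (real k * dt) / L^2)) = T p k" for p k
    unfolding T_def lam_def by (simp add: exp_of_nat_mult[symmetric] algebra_simps)
  have summable_T: "summable (\<lambda>p. T p k)" for k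
  proof (rule summable_comparison_test'[OF c(3)])
    show "norm (T p k) \<le> c p" for p
      unfolding T_def lam_def using c(1)[of p] dt
      by (simp add: abs_mult mult_left_le power_le_one)
  qed
  have T_sum: "dt * (\<Sum>k<n. T p k) \<le> (1 + L^2 / pi^2) * c p" for p
  proof (cases "p = 0")
    case False
    then have lam: "lam p \<ge> pi^2 / L^2"
      unfolding lam_def by (simp add: divide_right_mono)
    then have "lam p > 0"
      using L by (smt (verit) divide_pos_pos pi_gt_zero zero_less_power)
    have "dt * (\<Sum>k<n. T p k) = c p * (dt * (\<Sum>k<n. exp (- (lam p * dt)) ^ k))"
      unfolding T_def by (simp add: sum_distrib_left mult_ac)
    also have "\<dots> \<le> c p * (dt + 1 / lam p)"
      using dt_sum_exp_power_le[OF \<open>lam p > 0\<close> dt(1)] c(1) by (rule mult_left_mono)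
    also have "\<dots> \<le> c p * (1 + L^2 / pi^2)"
      using lam \<open>lam p > 0\<close> L dt(2) c(1)[of p]
      by (intro mult_left_mono add_mono) (auto simp: field_simps)
    finally show ?thesis
      by (simp add: mult.commute)
  qed (simp add: T_def c(2))
  have "dt * (\<Sum>k<n. \<Sum>p. c p * exp (- ((real p)^2 * pi^2 * (real k * dt) / L^2)))
      = (\<Sum>p. dt * (\<Sum>k<n. T p k))"
    unfolding T_eq using summable_T
    by (simp add: suminf_sum[symmetric] suminf_mult[symmetric] summable_sum)
  also have "\<dots> \<le> (\<Sum>p. (1 + L^2 / pi^2) * c p)"
    using T_sum summable_T c(3) by (intro suminf_le summable_mult summable_sum) auto
  also have "\<dots> = (1 + L^2 / pi^2) * (\<Sum>p. c p)"
    using c(3) by (rule suminf_mult)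
  finally show ?thesis .
qed

lemma heat_scheme_consistency_error_le:
  fixes L dt dx :: real
  assumes L: "L > 0" and u0: "iter_dom_P L u0" and dt: "0 < dt" "dt < 1"
    and J: "2 \<le> J" and dx: "dx \<noteq> 0" and cfl: "dt / dx^2 \<le> 1/2"
  shows "l2norm J (\<lambda>j. dt * (\<Sum>k<n. ((scheme_step J dx dt) ^^ (n - 1 - k))
            (\<lambda>i. dx^2 * L2delta J dx (heat_sol L u0 (real k * dt)) i) j))
    \<le> sqrt 2 * (pi / L) ^ 4 * (1 + L^2 / pi^2) / 3 * dx^2
        * (\<Sum>p. \<bar>alpha L u0 (Suc p)\<bar> * (real (Suc p))^4)"
proof -
  define c where "c p = \<bar>alpha L u0 p\<bar> * real p ^ 4" for p
  define M where "M t = (\<Sum>p. c p * exp (- ((real p)^2 * pi^2 * t / L^2)))" for t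
  define K where "K = sqrt 2 * (pi / L) ^ 4 / 3"
  have summable: "summable c"
    unfolding c_def using summable_abs_alpha_mult_power4[OF L u0] .
  have "l2norm J (\<lambda>j. dt * (\<Sum>k<n. ((scheme_step J dx dt) ^^ (n - 1 - k))
            (\<lambda>i. dx^2 * L2delta J dx (heat_sol L u0 (real k * dt)) i) j))
      \<le> dt * (\<Sum>k<n. l2norm J (\<lambda>i. dx^2 * L2delta J dx (heat_sol L u0 (real k * dt)) i))"
    using J dx dt cfl by (intro l2norm_duhamel_sum_le) auto
  also have "\<dots> \<le> dt * (\<Sum>k<n. dx^2 * K * M (real k * dt))"
    unfolding K_def M_def c_def using L J dt summable_abs_alpha_mult_power4[OF L u0]
    by (intro mult_left_mono sum_mono l2norm_L2delta_heat_sol_le) auto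
  also have "\<dots> = dx^2 * K * (dt * (\<Sum>k<n. M (real k * dt)))"
    by (simp add: sum_distrib_left mult_ac)
  also have "\<dots> \<le> dx^2 * K * ((1 + L^2 / pi^2) * (\<Sum>p. c p))"
    unfolding M_def using L dt summable_abs_alpha_mult_power4[OF L u0]
    by (intro mult_left_mono dt_sum_heat_modes_le) (auto simp: c_def K_def)
  also have "(\<Sum>p. c p) = (\<Sum>p. c (Suc p))"
    using suminf_split_head[OF summable] by (simp add: c_def[of 0])
  finally show ?thesis
    unfolding K_def c_def by (simp add: mult_ac)
qed

theorem proposition3p6:
  fixes L :: real
  assumes "L > 0"
  shows "\<exists>C>0. \<forall>(u0::real \<Rightarrow> real) (dt::real) (J::nat) (n::nat).
     H6 L u0 \<and> iter_dom_P L u0 \<and> 0 < dt \<and> dt < 1 \<and> 2 \<le> J \<and>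
     dt / (L / (real J - 1))^2 \<le> 1/2 \<and> 1 \<le> n \<longrightarrow>
     l2norm J (\<lambda>j. dt * (\<Sum>k<n.
        ((scheme_step J (L / (real J - 1)) dt) ^^ (n - 1 - k))
          (\<lambda>i. (L / (real J - 1))^2 *
               L2delta J (L / (real J - 1)) (heat_sol L u0 (real k * dt)) i) j))
     \<le> C * (L / (real J - 1))^2 * (\<Sum>p. \<bar>alpha L u0 (Suc p)\<bar> * (real (Suc p))^4)"
proof (intro exI[of _ "sqrt 2 * (pi / L) ^ 4 * (1 + L^2 / pi^2) / 3"] conjI allI impI)
  show "sqrt 2 * (pi / L) ^ 4 * (1 + L^2 / pi^2) / 3 > 0"
    using assms by (simp add: add_pos_nonneg)
  fix u0 :: "real \<Rightarrow> real" and dt :: real and J n :: nat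
  assume "H6 L u0 \<and> iter_dom_P L u0 \<and> 0 < dt \<and> dt < 1 \<and> 2 \<le> J \<and>
    dt / (L / (real J - 1))^2 \<le> 1/2 \<and> 1 \<le> n"
  moreover have "2 \<le> J \<Longrightarrow> L / (real J - 1) \<noteq> 0"
    using assms by simp
  ultimately show "l2norm J (\<lambda>j. dt * (\<Sum>k<n.
        ((scheme_step J (L / (real J - 1)) dt) ^^ (n - 1 - k))
          (\<lambda>i. (L / (real J - 1))^2 *
               L2delta J (L / (real J - 1)) (heat_sol L u0 (real k * dt)) i) j))
     \<le> sqrt 2 * (pi / L) ^ 4 * (1 + L^2 / pi^2) / 3 * (L / (real J - 1))^2
        * (\<Sum>p. \<bar>alpha L u0 (Suc p)\<bar> * (real (Suc p))^4)"
    using heat_scheme_consistency_error_le[OF assms] by blast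
qed

end
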